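(* Let $N$ and $N_k$ be integers with $1\le N_k\le N$. For a vector $\boldsymbol{\zeta}_k=(\boldsymbol{\zeta}_k[1],\dots,\boldsymbol{\zeta}_k[N_k])$ of $N_k$ pairwise distinct elements of $\{1,\dots,N\}$, define its variance $$\bar{\boldsymbol\zeta}_k=\frac{1}{N_k}\sum_{n=1}^{N_k}\boldsymbol{\zeta}_k[n]^2-\frac{1}{N_k^2}\Big[\sum_{n=1}^{N_k}\boldsymbol{\zeta}_k[n]\Big]^2 .$$ Then, over all such vectors, $\bar{\boldsymbol\zeta}_k$ is maximized, and consequently the range Cramér–Rao bound $$\mathrm{CRB}(R)=\frac{c^2\sigma^2}{8|\beta|^2\pi^2 G_k N_k\Delta f^2\,\bar{\boldsymbol\zeta}_k}$$ is minimized, when the subcarriers are assigned according to the edge-first distribution.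
   Context: Here $c,\sigma,|\beta|,G_k,\Delta f$ are fixed positive constants (speed of light, noise standard deviation, magnitude of the path gain, number of sensing symbols, subcarrier spacing), so minimizing $\mathrm{CRB}(R)$ is equivalent to maximizing $\bar{\boldsymbol\zeta}_k$. The entries $\boldsymbol{\zeta}_k[n]$ are the indices of the subcarriers assigned to the user. The edge-first distribution is the one in which subcarriers nearest the two edges of the index range $\{1,\dots,N\}$ are preferentially assigned, i.e. the set of assigned indices is $\{1,\dots,a\}\cup\{N-b+1,\dots,N\}$ with $a+b=N_k$ and $|a-b|\le 1$ (e.g. for $N=48$, $N_k=16$: indices $1,\dots,8,41,\dots,48$). *)

theory Defs
  imports Complex_Main
begin

definition zeta_var :: "nat \<Rightarrow> (nat \<Rightarrow> nat) \<Rightarrow> real" where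
  "zeta_var Nk \<zeta> =
     (1 / real Nk) * (\<Sum>n = 1..Nk. (real (\<zeta> n))\<^sup>2)
     - (1 / (real Nk)\<^sup>2) * (\<Sum>n = 1..Nk. real (\<zeta> n))\<^sup>2"

definition CRB_range :: "real \<Rightarrow> real \<Rightarrow> real \<Rightarrow> real \<Rightarrow> nat \<Rightarrow> real \<Rightarrow> real \<Rightarrow> real" where
  "CRB_range c \<sigma> \<beta>abs G Nk \<Delta>f v =
     c\<^sup>2 * \<sigma>\<^sup>2 / (8 * \<beta>abs\<^sup>2 * pi\<^sup>2 * G * real Nk * \<Delta>f\<^sup>2 * v)"

definition edge_first_set :: "nat \<Rightarrow> nat \<Rightarrow> nat \<Rightarrow> nat set" where
  "edge_first_set N a b = {1..a} \<union> {N - b + 1..N}"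

end

(*
  Up to the factor 1 / Nk^2 the variance is the dispersion D(u) = K * sum u^2 - (sum u)^2,
  which equals half the sum of all squared differences (u i - u j)^2 and is therefore convex.
  Enumerate the assigned indices increasingly as y i = i + g i with
  0 <= g 1 <= ... <= g K <= L = N - K.  Splitting L * g i into the L level indicators [s < g i]
  writes L * y as a sum of L edge-first configurations  i + L * [t s < i],  so by convexity
  L^2 * D(y) <= L * sum_s D(edge-first with split t s).  An edge-first configuration with split t
  has dispersion D(1..K) + t (K - t) L (L + K), largest for the balanced split.  Finally the
  Cramer-Rao bound is antitone in the variance.
*)

theory Submission
  imports Defs "HOL-Library.Infinite_Set"
begin

definition dispersion :: "'a set \<Rightarrow> ('a \<Rightarrow> real) \<Rightarrow> real" where
  "dispersion I u = real (card I) * (\<Sum>i\<in>I. (u i)\<^sup>2) - (\<Sum>i\<in>I. u i)\<^sup>2"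

lemma dispersion_eq_pairwise:
  assumes "finite I"
  shows "dispersion I u = (\<Sum>i\<in>I. \<Sum>j\<in>I. (u i - u j)\<^sup>2) / 2"
proof -
  have "(\<Sum>i\<in>I. \<Sum>j\<in>I. (u i - u j)\<^sup>2)
      = (\<Sum>i\<in>I. \<Sum>j\<in>I. (u i)\<^sup>2 + (u j)\<^sup>2) - 2 * (\<Sum>i\<in>I. \<Sum>j\<in>I. u i * u j)"
    by (simp add: power2_diff sum_subtractf sum_distrib_left mult.assoc)
  also have "(\<Sum>i\<in>I. \<Sum>j\<in>I. (u i)\<^sup>2 + (u j)\<^sup>2) = 2 * real (card I) * (\<Sum>i\<in>I. (u i)\<^sup>2)"
    by (simp add: sum.distrib sum_distrib_left[symmetric] sum_distrib_right[symmetric])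
  also have "(\<Sum>i\<in>I. \<Sum>j\<in>I. u i * u j) = (\<Sum>i\<in>I. u i)\<^sup>2"
    by (simp add: power2_eq_square sum_product)
  finally show ?thesis
    unfolding dispersion_def by simp
qed

lemma dispersion_nonneg: "finite I \<Longrightarrow> 0 \<le> dispersion I u"
  by (simp add: dispersion_eq_pairwise sum_nonneg)

lemma dispersion_pos:
  assumes "finite I" "i \<in> I" "j \<in> I" "u i \<noteq> u j"
  shows "0 < dispersion I u"
proof -
  have "0 < (u i - u j)\<^sup>2"
    using assms(4) by simp
  also have "\<dots> \<le> (\<Sum>j'\<in>I. (u i - u j')\<^sup>2)"
    using assms by (intro member_le_sum) auto
  also have "\<dots> \<le> (\<Sum>i'\<in>I. \<Sum>j'\<in>I. (u i' - u j')\<^sup>2)"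
    using assms by (intro member_le_sum sum_nonneg) auto
  finally show ?thesis
    using assms(1) by (simp add: dispersion_eq_pairwise)
qed

lemma dispersion_cong:
  assumes "\<And>i. i \<in> I \<Longrightarrow> u i = v i"
  shows "dispersion I u = dispersion I v"
  unfolding dispersion_def by (simp add: assms)

lemma dispersion_scale: "dispersion I (\<lambda>i. c * u i) = c\<^sup>2 * dispersion I u"
  unfolding dispersion_def
  by (simp add: sum_distrib_left[symmetric] algebra_simps)

lemma dispersion_reindex: "inj_on f A \<Longrightarrow> dispersion A (\<lambda>x. u (f x)) = dispersion (f ` A) u"
  unfolding dispersion_def by (simp add: sum.reindex card_image)

lemma dispersion_sum_le:
  assumes "finite I" "finite T"
  shows "dispersion I (\<lambda>i. \<Sum>s\<in>T. w s i) \<le> real (card T) * (\<Sum>s\<in>T. dispersion I (w s))"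
proof -
  have sq_sum_le: "(\<Sum>s\<in>T. z s)\<^sup>2 \<le> real (card T) * (\<Sum>s\<in>T. (z s)\<^sup>2)" for z
    using dispersion_nonneg[OF assms(2), of z] by (simp add: dispersion_def)
  have "dispersion I (\<lambda>i. \<Sum>s\<in>T. w s i) = (\<Sum>i\<in>I. \<Sum>j\<in>I. (\<Sum>s\<in>T. w s i - w s j)\<^sup>2) / 2"
    using assms by (simp add: dispersion_eq_pairwise sum_subtractf)
  also have "\<dots> \<le> (\<Sum>i\<in>I. \<Sum>j\<in>I. real (card T) * (\<Sum>s\<in>T. (w s i - w s j)\<^sup>2)) / 2"
    by (intro divide_right_mono sum_mono sq_sum_le) auto
  also have "\<dots> = real (card T) * (\<Sum>s\<in>T. dispersion I (w s))"
    using assms by (simp add: dispersion_eq_pairwise sum_distrib_left sum_divide_distrib sum.swap[of _ T])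
  finally show ?thesis .
qed

text \<open>The increasing enumeration of an edge-first set: a indices at the lower edge, then a gap of
  L = N - K unused subcarriers.\<close>

definition edge_first_enum :: "nat \<Rightarrow> nat \<Rightarrow> nat \<Rightarrow> nat" where
  "edge_first_enum L a i = (if a < i then i + L else i)"

lemma inj_edge_first_enum: "inj_on (edge_first_enum L a) A"
  by (rule inj_onI) (auto simp: edge_first_enum_def split: if_splits)

lemma edge_first_enum_image:
  assumes "a + b = K" "K \<le> N"
  shows "edge_first_enum (N - K) a ` {1..K} = edge_first_set N a b"
proof (rule set_eqI)
  fix x
  have "x \<in> edge_first_set N a b \<longleftrightarrow>
      (x \<le> a \<and> x \<in> {1..K}) \<or> (a < x - (N - K) \<and> x - (N - K) \<in> {1..K} \<and> N - K \<le> x)"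
    using assms by (auto simp: edge_first_set_def)
  then show "x \<in> edge_first_enum (N - K) a ` {1..K} \<longleftrightarrow> x \<in> edge_first_set N a b"
    by (auto simp: edge_first_enum_def image_iff intro: bexI[of _ "x - (N - K)"] bexI[of _ x])
qed

lemma dispersion_edge_first_enum:
  assumes "a \<le> K"
  shows "dispersion {1..K} (\<lambda>i. real (edge_first_enum L a i))
       = dispersion {1..K} real + real a * real (K - a) * real L * (real L + real K)"
proof -
  have "{i \<in> {1..K}. a < i} = {a<..K}"
    by auto
  then have upper: "(\<Sum>i=1..K. if a < i then f i else 0) = (\<Sum>i\<in>{a<..K}. f i)" for f :: "nat \<Rightarrow> real"
    by (simp add: sum.inter_filter[symmetric])
  have edge: "real (edge_first_enum L a i) = real i + (if a < i then real L else 0)" for i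
    by (simp add: edge_first_enum_def)
  have edge_sq: "(real (edge_first_enum L a i))\<^sup>2
      = (real i)\<^sup>2 + (if a < i then 2 * real L * real i + (real L)\<^sup>2 else 0)" for i
    by (simp add: edge_first_enum_def power2_sum algebra_simps)
  have gauss: "2 * (\<Sum>i=1..n. real i) = real n * (real n + 1)" for n
    using double_gauss_sum_from_Suc_0[of n] by simp
  have "(\<Sum>i=1..a. real i) + (\<Sum>i\<in>{a<..K}. real i) = (\<Sum>i=1..K. real i)"
    using assms by (subst sum.union_disjoint[symmetric]) (auto intro: sum.cong)
  then have upper_gauss: "2 * (\<Sum>i\<in>{a<..K}. real i) = real K * (real K + 1) - real a * (real a + 1)"
    using gauss[of a] gauss[of K] by linarith
  have s1: "(\<Sum>i=1..K. real (edge_first_enum L a i)) = (\<Sum>i=1..K. real i) + real (K - a) * real L"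
    using upper[of "\<lambda>_. real L"] unfolding edge by (simp add: sum.distrib)
  have s2: "(\<Sum>i=1..K. (real (edge_first_enum L a i))\<^sup>2)
      = (\<Sum>i=1..K. (real i)\<^sup>2) + 2 * real L * (\<Sum>i\<in>{a<..K}. real i) + real (K - a) * (real L)\<^sup>2"
    using upper[of "\<lambda>i. 2 * real L * real i + (real L)\<^sup>2"]
    unfolding edge_sq by (simp add: sum.distrib sum_distrib_left)
  have K: "real K = real a + real (K - a)"
    using assms by simp
  show ?thesis
    unfolding dispersion_def s1 s2 card_atLeastAtMost diff_Suc_1
    using upper_gauss gauss[of K] K by algebra
qed

lemma balanced_split_maximizes_product:
  fixes a b c K :: nat
  assumes "a + b = K" "a \<le> b + 1" "b \<le> a + 1" "c \<le> K"
  shows "c * (K - c) \<le> a * b"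
proof -
  have "0 \<le> (int c - int a) * (int c - int b)"
    using assms by (intro zero_le_mult_iff[THEN iffD2]) linarith
  moreover have "int (c * (K - c)) = int c * (int a + int b - int c)"
    using assms by simp
  then have "int (a * b) - int (c * (K - c)) = (int c - int a) * (int c - int b)"
    unfolding of_nat_mult by algebra
  ultimately show ?thesis
    by linarith
qed

lemma down_closed_eq_atLeastAtMost_card:
  fixes D :: "nat set"
  assumes "D \<subseteq> {1..K}"
    and down: "\<And>i j. j \<in> D \<Longrightarrow> 1 \<le> i \<Longrightarrow> i \<le> j \<Longrightarrow> i \<in> D"
  shows "D = {1..card D}"
proof (cases "D = {}")
  case False
  have "finite D"
    using assms(1) finite_subset by blast
  have "D = {1..Max D}"
  proof
    show "D \<subseteq> {1..Max D}"
      using assms(1) \<open>finite D\<close> by auto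
    show "{1..Max D} \<subseteq> D"
      using down[OF Max_in[OF \<open>finite D\<close> False]] by auto
  qed
  then show ?thesis
    by (metis card_atLeastAtMost diff_Suc_1)
qed simp

lemma strict_mono_on_add_diff_le:
  fixes y :: "nat \<Rightarrow> nat"
  assumes "strict_mono_on {m..n} y" "m \<le> i" "i \<le> j" "j \<le> n"
  shows "y i + (j - i) \<le> y j"
  using assms(3,4)
proof (induction j rule: dec_induct)
  case (step k)
  then have "y k < y (Suc k)"
    using assms(1,2) by (intro strict_mono_onD[OF assms(1)]) auto
  with step show ?case
    by simp
qed simp

lemma ex_strict_mono_on_enumeration:
  fixes S :: "nat set"
  assumes "finite S"
  obtains y where "strict_mono_on {1..card S} y" "y ` {1..card S} = S"
proof -
  obtain h where h: "bij_betw h {..<card S} S" "strict_mono_on {..<card S} h"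
    using ex_bij_betw_strict_mono_card[OF assms] by blast
  show ?thesis
  proof
    show "strict_mono_on {1..card S} (\<lambda>i. h (i - 1))"
      by (intro strict_mono_onI) (auto intro!: strict_mono_onD[OF h(2)])
    show "(\<lambda>i. h (i - 1)) ` {1..card S} = S"
      using h(1) unfolding image_Suc_lessThan[symmetric] image_image bij_betw_def by simp
  qed
qed

lemma sum_edge_first_enum_sublevels:
  fixes g :: "nat \<Rightarrow> nat"
  assumes mono: "mono_on {1..K} g" and bound: "\<forall>i\<in>{1..K}. g i \<le> L" and i: "i \<in> {1..K}"
  shows "(\<Sum>s<L. real (edge_first_enum L (card {j \<in> {1..K}. g j \<le> s}) i)) = real L * real (i + g i)"
proof -
  have g_le: "g j \<le> g k" if "1 \<le> j" "j \<le> k" "k \<le> K" for j k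
    using that by (simp add: mono_onD[OF mono])
  have "real (edge_first_enum L (card {j \<in> {1..K}. g j \<le> s}) i) = real i + (if s < g i then real L else 0)" for s
  proof -
    have "{j \<in> {1..K}. g j \<le> s} = {1..card {j \<in> {1..K}. g j \<le> s}}"
      by (rule down_closed_eq_atLeastAtMost_card[of _ K]) (auto intro: order_trans[OF g_le])
    then have "card {j \<in> {1..K}. g j \<le> s} < i \<longleftrightarrow> s < g i"
      using i by (metis (lifting) atLeastAtMost_iff mem_Collect_eq not_le)
    then show ?thesis
      by (simp add: edge_first_enum_def)
  qed
  moreover have "{s \<in> {..<L}. s < g i} = {..<g i}"
    using bound i by (auto intro: less_le_trans)
  then have "(\<Sum>s<L. if s < g i then real L else 0) = real (g i) * real L"
    by (simp add: sum.inter_filter[symmetric])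
  ultimately show ?thesis
    by (simp add: sum.distrib algebra_simps)
qed

lemma dispersion_monotone_gaps_le_edge_first:
  fixes g :: "nat \<Rightarrow> nat"
  assumes mono: "mono_on {1..K} g" and bound: "\<forall>i\<in>{1..K}. g i \<le> L"
    and split: "a + b = K" "a \<le> b + 1" "b \<le> a + 1"
  shows "dispersion {1..K} (\<lambda>i. real (i + g i)) \<le> dispersion {1..K} (\<lambda>i. real (edge_first_enum L a i))"
proof (cases "L = 0")
  case True
  then show ?thesis
    using bound by (intro eq_refl dispersion_cong) (simp add: edge_first_enum_def)
next
  case False
  define t where "t s = card {j \<in> {1..K}. g j \<le> s}" for s
  define w where "w s i = real (edge_first_enum L (t s) i)" for s i
  let ?E = "dispersion {1..K} (\<lambda>i. real (edge_first_enum L a i))"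
  have "t s \<le> card {1..K}" for s
    unfolding t_def by (rule card_mono) auto
  then have "t s \<le> K" for s
    by simp
  have "a \<le> K"
    using split(1) by simp
  have vertex_le: "dispersion {1..K} (w s) \<le> ?E" for s
  proof -
    have "t s * (K - t s) \<le> a * (K - a)"
      using balanced_split_maximizes_product[OF split \<open>t s \<le> K\<close>] by (simp add: split(1)[symmetric])
    then have "real (t s) * real (K - t s) * (real L * (real L + real K))
        \<le> real a * real (K - a) * (real L * (real L + real K))"
      by (intro mult_right_mono) (simp_all flip: of_nat_mult)
    then show ?thesis
      unfolding w_def dispersion_edge_first_enum[OF \<open>t s \<le> K\<close>]
        dispersion_edge_first_enum[OF \<open>a \<le> K\<close>]
      by (simp add: mult.assoc)
  qed
  have "(real L)\<^sup>2 * dispersion {1..K} (\<lambda>i. real (i + g i)) = dispersion {1..K} (\<lambda>i. \<Sum>s<L. w s i)"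
    unfolding dispersion_scale[symmetric] w_def t_def
    by (intro dispersion_cong sum_edge_first_enum_sublevels[OF mono bound, symmetric])
  also have "\<dots> \<le> real L * (\<Sum>s<L. dispersion {1..K} (w s))"
    using dispersion_sum_le[of "{1..K}" "{..<L}" w] by simp
  also have "\<dots> \<le> real L * (\<Sum>s<L. ?E)"
    by (intro mult_left_mono sum_mono vertex_le) simp
  also have "\<dots> = (real L)\<^sup>2 * ?E"
    by (simp add: power2_eq_square)
  finally show ?thesis
    using False by simp
qed

lemma dispersion_subset_le_edge_first:
  fixes S :: "nat set"
  assumes S: "S \<subseteq> {1..N}" "card S = K" and split: "a + b = K" "a \<le> b + 1" "b \<le> a + 1"
  shows "dispersion S real \<le> dispersion {1..K} (\<lambda>i. real (edge_first_enum (N - K) a i))"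
proof -
  have "finite S"
    using S(1) finite_subset by blast
  then obtain y where y: "strict_mono_on {1..K} y" "y ` {1..K} = S"
    using ex_strict_mono_on_enumeration[OF \<open>finite S\<close>] unfolding S(2) by blast
  have gap: "y i + (j - i) \<le> y j" if "1 \<le> i" "i \<le> j" "j \<le> K" for i j
    using strict_mono_on_add_diff_le[OF y(1) that] .
  have range: "y i \<in> {1..N}" if "i \<in> {1..K}" for i
    using imageI[OF that, of y] y(2) S(1) by blast
  define g where "g i = y i - i" for i
  have y_eq: "y i = i + g i" if "i \<in> {1..K}" for i
    using gap[of 1 i] range[of 1] that unfolding g_def by auto
  have mono: "mono_on {1..K} g"
  proof (rule mono_onI)
    fix i j
    assume "i \<in> {1..K}" "j \<in> {1..K}" "i \<le> j"
    then show "g i \<le> g j"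
      using gap[of i j] by (simp add: g_def)
  qed
  have bound: "\<forall>i\<in>{1..K}. g i \<le> N - K"
  proof
    fix i
    assume "i \<in> {1..K}"
    then show "g i \<le> N - K"
      using gap[of i K] range[of K] unfolding g_def by auto
  qed
  have "dispersion S real = dispersion {1..K} (\<lambda>i. real (y i))"
    unfolding y(2)[symmetric] by (rule dispersion_reindex[OF strict_mono_on_imp_inj_on[OF y(1)], symmetric])
  also have "\<dots> = dispersion {1..K} (\<lambda>i. real (i + g i))"
    by (rule dispersion_cong) (simp add: y_eq)
  also have "\<dots> \<le> dispersion {1..K} (\<lambda>i. real (edge_first_enum (N - K) a i))"
    by (rule dispersion_monotone_gaps_le_edge_first[OF mono bound split])
  finally show ?thesis .
qed

lemma zeta_var_eq_dispersion:
  assumes "inj_on \<zeta> {1..K}"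
  shows "zeta_var K \<zeta> = dispersion (\<zeta> ` {1..K}) real / (real K)\<^sup>2"
  unfolding dispersion_reindex[OF assms, symmetric]
  by (cases "K = 0") (simp_all add: zeta_var_def dispersion_def field_simps power2_eq_square)

lemma zeta_var_pos:
  assumes "inj_on \<zeta> {1..K}" "2 \<le> K"
  shows "0 < zeta_var K \<zeta>"
proof -
  have "\<zeta> 1 \<noteq> \<zeta> 2"
    using assms by (auto dest: inj_onD)
  then have "0 < dispersion (\<zeta> ` {1..K}) real"
    using assms(2) by (intro dispersion_pos[of _ "\<zeta> 1" "\<zeta> 2"]) auto
  then show ?thesis
    using assms(2) by (simp add: zeta_var_eq_dispersion[OF assms(1)])
qed

lemma CRB_range_antimono:
  assumes "0 < \<beta>abs" "0 < G" "0 < \<Delta>f" "0 < Nk" "0 < v" "v \<le> w"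
  shows "CRB_range c \<sigma> \<beta>abs G Nk \<Delta>f w \<le> CRB_range c \<sigma> \<beta>abs G Nk \<Delta>f v"
proof -
  define D where "D = 8 * \<beta>abs\<^sup>2 * pi\<^sup>2 * G * real Nk * \<Delta>f\<^sup>2"
  have "0 < D"
    using assms(1-4) by (simp add: D_def)
  then show ?thesis
    unfolding CRB_range_def D_def[symmetric]
    using assms(5,6) by (intro divide_left_mono mult_left_mono mult_pos_pos) auto
qed

theorem proposition2:
  fixes N Nk a b :: nat and \<zeta> \<zeta>e :: "nat \<Rightarrow> nat"
    and c \<sigma> \<beta>abs G \<Delta>f :: real
  assumes "1 \<le> Nk" and "Nk \<le> N"
    and "inj_on \<zeta> {1..Nk}" and "\<zeta> ` {1..Nk} \<subseteq> {1..N}"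
    and "a + b = Nk" and "a \<le> b + 1" and "b \<le> a + 1"
    and "inj_on \<zeta>e {1..Nk}" and "\<zeta>e ` {1..Nk} = edge_first_set N a b"
    and "c > 0" and "\<sigma> > 0" and "\<beta>abs > 0" and "G > 0" and "\<Delta>f > 0"
  shows "zeta_var Nk \<zeta> \<le> zeta_var Nk \<zeta>e
       \<and> CRB_range c \<sigma> \<beta>abs G Nk \<Delta>f (zeta_var Nk \<zeta>e)
           \<le> CRB_range c \<sigma> \<beta>abs G Nk \<Delta>f (zeta_var Nk \<zeta>)"
proof
  have "dispersion (\<zeta> ` {1..Nk}) real \<le> dispersion {1..Nk} (\<lambda>i. real (edge_first_enum (N - Nk) a i))"
    using assms(3-7) by (intro dispersion_subset_le_edge_first) (auto simp: card_image)
  also have "\<dots> = dispersion (\<zeta>e ` {1..Nk}) real"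
    unfolding assms(9) edge_first_enum_image[OF assms(5,2), symmetric] by (rule dispersion_reindex[OF inj_edge_first_enum])
  finally show var_le: "zeta_var Nk \<zeta> \<le> zeta_var Nk \<zeta>e"
    unfolding zeta_var_eq_dispersion[OF assms(3)] zeta_var_eq_dispersion[OF assms(8)]
    by (rule divide_right_mono) simp
  show "CRB_range c \<sigma> \<beta>abs G Nk \<Delta>f (zeta_var Nk \<zeta>e) \<le> CRB_range c \<sigma> \<beta>abs G Nk \<Delta>f (zeta_var Nk \<zeta>)"
  proof (cases "Nk = 1")
    case True
    \<comment> \<open>Both variances vanish and both bounds are the junk value of a division by 0.\<close>
    then show ?thesis
      by (simp add: zeta_var_def)
  next
    case False
    then show ?thesis
      using assms(1,3,12-14) var_le zeta_var_pos by (intro CRB_range_antimono) auto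
  qed
qed

end
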